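(* Let $(\mathcal A,\le_{\mathcal A},\vee,\wedge,\bot,\top)$ be a complete lattice with monotone maps $\alpha:\mathcal Q\to\mathcal A$ and $\gamma:\mathcal A\to\mathcal Q$ forming a Galois embedding. Then the following are equivalent: (1) $\mathcal A$ is a well-structured abstract domain; (2) for every $a\in\mathcal A$, every family $\rho_i\in\mathcal D(\mathcal H_V)$ and reals $x_i>0$ ($i=1,2,\dots$) with $\sum_i x_i\rho_i\in\mathcal D(\mathcal H_V)$: $\sum_i x_i\rho_i\in\gamma(a)$ iff $\rho_i\in\gamma(a)$ for all $i$; (3) for every $a\in\mathcal A$, the set $\gamma(a)\subseteq\mathcal D(\mathcal H_V)$ is (i) convex; (ii) an $\omega$-cpo: if $\rho_i\in\gamma(a)$ and $\rho_i\sqsubseteq\rho_{i+1}$ for all $i\ge1$ then $\bigsqcup_i\rho_i\in\gamma(a)$; (iii) down-closed: $\rho\sqsubseteq\sigma$ and $\sigma\in\gamma(a)$ imply $\rho\in\gamma(a)$; (iv) closed under positive scalar multiplication: if $\rho\in\gamma(a)$, $x>0$ and $x\rho\in\mathcal D(\mathcal H_V)$ then $x\rho\in\gamma(a)$.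
   Context: Fix a finite set $V$ of quantum variables, each a qubit with state space $\mathcal H_q\cong\mathbb C^2$; $\mathcal H_V=\bigotimes_{q\in V}\mathcal H_q$. $\mathcal D(\mathcal H_V)$ is the set of partial density operators on $\mathcal H_V$ (positive operators of trace at most $1$), ordered by the Löwner order $\sqsubseteq$ ($A\sqsubseteq B$ iff $B-A$ is positive); $\bigsqcup$ denotes least upper bound in this order. The concrete domain is $\mathcal Q=2^{\mathcal D(\mathcal H_V)}$ ordered by inclusion. For posets $C,A$ and monotone $\alpha:C\to A$, $\gamma:A\to C$, $(\alpha,\gamma)$ is a Galois connection if $c\le_C\gamma(a)\iff\alpha(c)\le_A a$ for all $c,a$, and a Galois embedding if moreover $\alpha\circ\gamma=\mathrm{id}_A$. A complete lattice $(\mathcal A,\le_{\mathcal A},\vee,\wedge,\bot,\top)$ with monotone $\alpha:\mathcal Q\to\mathcal A$, $\gamma:\mathcal A\to\mathcal Q$ is a well-structured abstract domain if (a) $(\alpha,\gamma)$ is a Galois embedding, and (b) for any family $\rho_i\in\mathcal D(\mathcal H_V)$ and reals $x_i>0$ ($i=1,2,\dots$) with $\sum_i x_i\rho_i\in\mathcal D(\mathcal H_V)$, $\alpha(\sum_i x_i\rho_i)=\bigvee_i\alpha(\rho_i)$, where $\alpha(\rho)$ abbreviates $\alpha(\{\rho\})$. *)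

theory Defs
  imports "HOL-Analysis.Analysis"
begin

text \<open>Quantum variables: a finite type 'v of qubits. The computational basis of
  H_V = tensor of C^2 over V is indexed by assignments 'v \<Rightarrow> bool, so operators
  on H_V are complex matrices indexed by ('v \<Rightarrow> bool).\<close>

type_synonym 'v qop = "complex ^ ('v \<Rightarrow> bool) ^ ('v \<Rightarrow> bool)"

definition psd :: "complex ^ 'n ^ 'n \<Rightarrow> bool" where
  "psd A \<longleftrightarrow> (\<forall>v :: complex ^ 'n.
     Im (\<Sum>i\<in>UNIV. cnj (v $ i) * (A *v v) $ i) = 0 \<and>
     Re (\<Sum>i\<in>UNIV. cnj (v $ i) * (A *v v) $ i) \<ge> 0)"

definition mtrace :: "complex ^ 'n ^ 'n \<Rightarrow> complex" where
  "mtrace A = (\<Sum>i\<in>UNIV. A $ i $ i)"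

definition pdo :: "complex ^ 'n ^ 'n \<Rightarrow> bool" where
  "pdo A \<longleftrightarrow> psd A \<and> Re (mtrace A) \<le> 1"

definition PDO :: "('v::finite) qop set" where
  "PDO = {A. pdo A}"

definition lowner :: "complex ^ 'n ^ 'n \<Rightarrow> complex ^ 'n ^ 'n \<Rightarrow> bool" where
  "lowner A B \<longleftrightarrow> psd (B - A)"

definition is_lowner_lub :: "(nat \<Rightarrow> ('v::finite) qop) \<Rightarrow> 'v qop \<Rightarrow> bool" where
  "is_lowner_lub \<rho> \<sigma> \<longleftrightarrow> \<sigma> \<in> PDO \<and> (\<forall>i. lowner (\<rho> i) \<sigma>) \<and>
     (\<forall>\<tau>\<in>PDO. (\<forall>i. lowner (\<rho> i) \<tau>) \<longrightarrow> lowner \<sigma> \<tau>)"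

text \<open>The concrete domain Q = 2^{D(H_V)} consists of the sets S \<subseteq> PDO.\<close>

definition galois_connection ::
  "(('v::finite) qop set \<Rightarrow> 'a::order) \<Rightarrow> ('a \<Rightarrow> 'v qop set) \<Rightarrow> bool" where
  "galois_connection \<alpha> \<gamma> \<longleftrightarrow>
     (\<forall>c a. c \<subseteq> PDO \<longrightarrow> (c \<subseteq> \<gamma> a \<longleftrightarrow> \<alpha> c \<le> a))"

definition galois_embedding ::
  "(('v::finite) qop set \<Rightarrow> 'a::order) \<Rightarrow> ('a \<Rightarrow> 'v qop set) \<Rightarrow> bool" where
  "galois_embedding \<alpha> \<gamma> \<longleftrightarrow> galois_connection \<alpha> \<gamma> \<and> (\<forall>a. \<alpha> (\<gamma> a) = a)"

definition admissible_family ::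
  "nat set \<Rightarrow> (nat \<Rightarrow> real) \<Rightarrow> (nat \<Rightarrow> ('v::finite) qop) \<Rightarrow> 'v qop \<Rightarrow> bool" where
  "admissible_family I x \<rho> \<sigma> \<longleftrightarrow> I \<noteq> {} \<and> (\<forall>i\<in>I. \<rho> i \<in> PDO \<and> x i > 0) \<and>
     ((\<lambda>i. x i *\<^sub>R \<rho> i) has_sum \<sigma>) I \<and> \<sigma> \<in> PDO"

definition well_structured ::
  "(('v::finite) qop set \<Rightarrow> 'a::complete_lattice) \<Rightarrow> ('a \<Rightarrow> 'v qop set) \<Rightarrow> bool" where
  "well_structured \<alpha> \<gamma> \<longleftrightarrow> galois_embedding \<alpha> \<gamma> \<and>
     (\<forall>I x \<rho> \<sigma>. admissible_family I x \<rho> \<sigma> \<longrightarrow> \<alpha> {\<sigma>} = (SUP i\<in>I. \<alpha> {\<rho> i}))"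

definition omega_cpo :: "('v::finite) qop set \<Rightarrow> bool" where
  "omega_cpo S \<longleftrightarrow> (\<forall>\<rho> \<sigma>. (\<forall>i. \<rho> i \<in> S) \<and> (\<forall>i. lowner (\<rho> i) (\<rho> (Suc i))) \<and>
     is_lowner_lub \<rho> \<sigma> \<longrightarrow> \<sigma> \<in> S)"

definition down_closed :: "('v::finite) qop set \<Rightarrow> bool" where
  "down_closed S \<longleftrightarrow> (\<forall>\<rho> \<sigma>. \<rho> \<in> PDO \<and> lowner \<rho> \<sigma> \<and> \<sigma> \<in> S \<longrightarrow> \<rho> \<in> S)"

definition scalar_closed :: "('v::finite) qop set \<Rightarrow> bool" where
  "scalar_closed S \<longleftrightarrow> (\<forall>\<rho> x. \<rho> \<in> S \<and> x > 0 \<and> x *\<^sub>R \<rho> \<in> PDO \<longrightarrow> x *\<^sub>R \<rho> \<in> S)"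

end

theory Submission
  imports Defs
begin

text \<open>The equivalence of (1) and (2) is pure Galois-connection reasoning: \<open>\<tau> \<in> \<gamma> a\<close> iff
  \<open>\<alpha> {\<tau>} \<le> a\<close>, so \<open>\<alpha> {\<sigma>} = (SUP i. \<alpha> {\<rho> i})\<close> says exactly that \<open>\<sigma>\<close> and the family
  \<open>\<rho>\<close> lie in the same sets \<open>\<gamma> a\<close>.

  For (2) \<open>\<Longrightarrow>\<close> (3), each closure property is (2) applied to a suitable admissible family:
  \<open>\<rho> + (\<sigma> - \<rho>) = \<sigma>\<close> for down-closure, a one-element family for scaling, a two-element one
  for convexity, and the telescoping increments of a Loewner chain for the \<open>\<omega>\<close>-cpo
  property. The chain converges in norm, since the norm of a positive matrix is bounded by a
  multiple of its trace and the traces of the increments sum to at most 1; and its limit is its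
  least upper bound, because positivity is preserved under limits.

  For (3) \<open>\<Longrightarrow>\<close> (2), every summand \<open>x\<^sub>i \<rho>\<^sub>i\<close> lies below the sum, hence \<open>\<rho>\<^sub>i \<in> \<gamma> a\<close> by
  down-closure and scaling; conversely each finite partial sum is a rescaled convex combination
  of the \<open>\<rho>\<^sub>i\<close>, and the sum is the least upper bound of the chain of partial sums.\<close>

subsection \<open>Positive matrices\<close>

definition qform :: "complex ^ 'n ^ 'n \<Rightarrow> complex ^ 'n \<Rightarrow> complex" where
  "qform A v = (\<Sum>i\<in>UNIV. cnj (v $ i) * (A *v v) $ i)"

lemma psd_iff_qform: "psd A \<longleftrightarrow> (\<forall>v. Im (qform A v) = 0 \<and> Re (qform A v) \<ge> 0)"
  unfolding psd_def qform_def ..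

lemma qform_add: "qform (A + B) v = qform A v + qform B v"
  unfolding qform_def
  by (simp add: matrix_vector_mult_def sum.distrib algebra_simps sum_distrib_left)

lemma qform_scaleR: "qform (c *\<^sub>R A) v = of_real c * qform A v"
  unfolding qform_def matrix_vector_mult_def vector_scaleR_component
  by (simp add: algebra_simps sum_distrib_left scaleR_conv_of_real)

lemma qform_zero: "qform 0 v = 0"
  unfolding qform_def by (simp add: matrix_vector_mult_def)

lemma qform_axis: "qform A (axis j 1) = A $ j $ j"
  unfolding qform_def
  by (simp add: matrix_vector_mult_def axis_def if_distrib if_distribR cong: if_cong)

lemma qform_two_entries:
  fixes A :: "complex ^ 'n ^ 'n"
  assumes "j \<noteq> k"
  shows "qform A (\<chi> l. if l = j then a else if l = k then b else 0) =
    cnj a * A$j$j * a + cnj a * A$j$k * b + cnj b * A$k$j * a + cnj b * A$k$k * b"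
proof -
  let ?v = "(\<chi> l. if l = j then a else if l = k then b else 0) :: complex ^ 'n"
  have "qform A ?v = (\<Sum>i\<in>{j,k}. cnj (?v $ i) * (A *v ?v) $ i)"
    unfolding qform_def by (rule sum.mono_neutral_right) auto
  also have "\<dots> = cnj a * (A *v ?v) $ j + cnj b * (A *v ?v) $ k"
    using assms by simp
  also have "(A *v ?v) $ j = (\<Sum>l\<in>{j,k}. A $ j $ l * ?v $ l)"
    unfolding matrix_vector_mult_def by simp (rule sum.mono_neutral_right, auto)
  also have "(A *v ?v) $ k = (\<Sum>l\<in>{j,k}. A $ k $ l * ?v $ l)"
    unfolding matrix_vector_mult_def by simp (rule sum.mono_neutral_right, auto)
  finally show ?thesis using assms by (simp add: algebra_simps)
qed

lemma tendsto_qform: "(f \<longlongrightarrow> L) F \<Longrightarrow> ((\<lambda>n. qform (f n) v) \<longlongrightarrow> qform L v) F"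
  unfolding qform_def matrix_vector_mult_def by (auto intro!: tendsto_intros)

lemma psd_add: "psd A \<Longrightarrow> psd B \<Longrightarrow> psd (A + B)"
  unfolding psd_iff_qform qform_add by simp

lemma psd_scaleR: "psd A \<Longrightarrow> c \<ge> 0 \<Longrightarrow> psd (c *\<^sub>R A)"
  unfolding psd_iff_qform qform_scaleR by simp

lemma psd_zero: "psd 0"
  unfolding psd_iff_qform qform_zero by simp

lemma psd_sum: "(\<And>i. i \<in> S \<Longrightarrow> psd (f i)) \<Longrightarrow> psd (sum f S)"
  by (induction S rule: infinite_finite_induct) (auto intro: psd_add psd_zero)

lemma psd_diag: "psd A \<Longrightarrow> Im (A$j$j) = 0 \<and> Re (A$j$j) \<ge> 0"
  unfolding psd_iff_qform by (metis qform_axis)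

lemma psd_limit:
  assumes lim: "(f \<longlongrightarrow> L) sequentially" and psd: "\<forall>\<^sub>F n in sequentially. psd (f n)"
  shows "psd L"
  unfolding psd_iff_qform
proof
  fix v
  have lim_v: "((\<lambda>n. qform (f n) v) \<longlongrightarrow> qform L v) sequentially"
    by (rule tendsto_qform[OF lim])
  have Im: "Im (qform L v) = 0"
  proof (rule LIMSEQ_unique)
    show "(\<lambda>n. Im (qform (f n) v)) \<longlonglongrightarrow> Im (qform L v)" by (intro tendsto_intros lim_v)
    have "\<forall>\<^sub>F n in sequentially. Im (qform (f n) v) = 0"
      using psd by eventually_elim (simp add: psd_iff_qform)
    then show "(\<lambda>n. Im (qform (f n) v)) \<longlonglongrightarrow> 0" by (rule tendsto_eventually)
  qed
  have "Re (qform L v) \<ge> 0"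
  proof (rule tendsto_lowerbound)
    show "(\<lambda>n. Re (qform (f n) v)) \<longlonglongrightarrow> Re (qform L v)" by (intro tendsto_intros lim_v)
    show "\<forall>\<^sub>F n in sequentially. Re (qform (f n) v) \<ge> 0"
      using psd by eventually_elim (simp add: psd_iff_qform)
  qed simp
  with Im show "Im (qform L v) = 0 \<and> 0 \<le> Re (qform L v)" by simp
qed

lemma mtrace_add: "mtrace (A + B) = mtrace A + mtrace B"
  unfolding mtrace_def by (simp add: sum.distrib)

lemma mtrace_diff: "mtrace (A - B) = mtrace A - mtrace B"
  unfolding mtrace_def by (simp add: sum_subtractf)

lemma mtrace_scaleR: "mtrace (c *\<^sub>R A) = of_real c * mtrace A"
  unfolding mtrace_def vector_scaleR_component
  by (simp add: sum_distrib_left scaleR_conv_of_real)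

lemma mtrace_zero: "mtrace 0 = 0"
  unfolding mtrace_def by simp

lemma mtrace_sum: "mtrace (sum f S) = (\<Sum>k\<in>S. mtrace (f k))"
  unfolding mtrace_def sum_component by (rule sum.swap)

lemma psd_mtrace_nonneg: "psd A \<Longrightarrow> Re (mtrace A) \<ge> 0"
  unfolding mtrace_def by (simp add: sum_nonneg psd_diag)

lemma psd_diag_sum_le_mtrace:
  assumes "psd A"
  shows "(\<Sum>i\<in>J. Re (A$i$i)) \<le> Re (mtrace A)"
  unfolding mtrace_def Re_sum by (rule sum_mono2) (auto simp: psd_diag assms)

lemma cmod_diff_le_Re_add:
  assumes "Im p = 0" "Im q = 0" "Re p \<ge> 0" "Re q \<ge> 0"
  shows "cmod (p - q) \<le> Re (p + q)"
proof -
  have "p - q = of_real (Re p - Re q)" using assms by (simp add: complex_eq_iff)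
  then have "cmod (p - q) = \<bar>Re p - Re q\<bar>" by (metis norm_of_real)
  then show ?thesis using assms by simp
qed

lemma psd_entry_bound:
  fixes A :: "complex ^ 'n ^ 'n"
  assumes "psd A"
  shows "cmod (A$j$k) \<le> Re (mtrace A)"
proof (cases "j = k")
  case True
  then show ?thesis
    using psd_diag[OF assms, of j] psd_diag_sum_le_mtrace[OF assms, of "{j}"]
    by (simp add: cmod_eq_Re)
next
  case False
  define p where "p b = qform A (\<chi> l. if l = j then 1 else if l = k then b else 0)" for b
  have p: "p b = A$j$j + A$j$k * b + cnj b * A$k$j + cnj b * A$k$k * b" for b
    unfolding p_def qform_two_entries[OF False] by simp
  have p_nonneg: "Im (p b) = 0" "Re (p b) \<ge> 0" for b
    using assms unfolding psd_iff_qform p_def by blast+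
  have diag: "Re (p b + p (-b)) = 2 * (Re (A$j$j) + Re (A$k$k))" if "cmod b = 1" for b
  proof -
    have "cnj b * b = 1" using that by (metis complex_norm_square mult.commute of_real_1 power_one)
    moreover have "p b + p (-b) = 2 * A$j$j + 2 * (cnj b * b) * A$k$k"
      unfolding p by (simp add: algebra_simps)
    ultimately show ?thesis by simp
  qed
  \<comment> \<open>polarization identity\<close>
  have "4 * A$j$k = (p 1 - p (-1)) - \<i> * (p \<i> - p (-\<i>))"
    unfolding p by (simp add: algebra_simps)
  then have "4 * cmod (A$j$k) \<le> cmod (p 1 - p (-1)) + cmod (p \<i> - p (-\<i>))"
    by (metis norm_mult norm_ii mult_1 norm_triangle_ineq4 norm_numeral)
  also have "\<dots> \<le> 4 * (Re (A$j$j) + Re (A$k$k))"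
    using cmod_diff_le_Re_add[OF p_nonneg(1) p_nonneg(1) p_nonneg(2) p_nonneg(2), of 1 "-1"] diag[of 1]
      cmod_diff_le_Re_add[OF p_nonneg(1) p_nonneg(1) p_nonneg(2) p_nonneg(2), of \<i> "-\<i>"] diag[of \<i>]
    by simp
  also have "Re (A$j$j) + Re (A$k$k) \<le> Re (mtrace A)"
    using psd_diag_sum_le_mtrace[OF assms, of "{j, k}"] False by simp
  finally show ?thesis by simp
qed

lemma norm_vec_le_sum: "norm (x :: 'b::real_normed_vector ^ 'n) \<le> (\<Sum>i\<in>UNIV. norm (x $ i))"
  unfolding norm_vec_def by (rule L2_set_le_sum) simp

lemma psd_norm_le_mtrace:
  fixes A :: "complex ^ 'n ^ 'n"
  assumes "psd A"
  shows "norm A \<le> real (CARD('n) * CARD('n)) * Re (mtrace A)"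
proof -
  have "norm A \<le> (\<Sum>i\<in>UNIV. \<Sum>l\<in>UNIV. norm (A $ i $ l))"
    using norm_vec_le_sum[of A] norm_vec_le_sum[of "A $ _"] by (meson order_trans sum_mono)
  also have "\<dots> \<le> (\<Sum>i\<in>(UNIV::'n set). \<Sum>l\<in>(UNIV::'n set). Re (mtrace A))"
    by (intro sum_mono) (simp add: psd_entry_bound assms)
  finally show ?thesis by simp
qed

lemma psd_antisym:
  fixes A :: "complex ^ 'n ^ 'n"
  assumes "psd A" "psd (- A)"
  shows "A = 0"
proof -
  have "mtrace (- A) = - mtrace A" using mtrace_diff[of 0 A] by (simp add: mtrace_zero)
  then have "Re (mtrace A) = 0"
    using psd_mtrace_nonneg[OF assms(1)] psd_mtrace_nonneg[OF assms(2)] by simp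
  then show ?thesis using psd_norm_le_mtrace[OF assms(1)] by simp
qed

lemma lowner_refl: "lowner A A"
  unfolding lowner_def by (simp add: psd_zero)

lemma lowner_trans: "lowner A B \<Longrightarrow> lowner B C \<Longrightarrow> lowner A C"
  unfolding lowner_def using psd_add[of "C - B" "B - A"] by simp

lemma lowner_chain: "(\<And>n. lowner (f n) (f (Suc n))) \<Longrightarrow> n \<le> m \<Longrightarrow> lowner (f n) (f m)"
  using transitive_stepwise_le[where R = "\<lambda>n m. lowner (f n) (f m)"] lowner_refl lowner_trans
  by blast

lemma lowner_antisym: "lowner A B \<Longrightarrow> lowner B A \<Longrightarrow> A = B"
  unfolding lowner_def using psd_antisym[of "B - A"] by simp

lemma lowner_add_psd: "psd B \<Longrightarrow> lowner A (A + B)"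
  unfolding lowner_def by simp

lemma lowner_diff_psd: "psd B \<Longrightarrow> lowner (A - B) A"
  unfolding lowner_def by simp

lemma lowner_mtrace: "lowner A B \<Longrightarrow> Re (mtrace A) \<le> Re (mtrace B)"
  unfolding lowner_def using psd_mtrace_nonneg[of "B - A"] by (simp add: mtrace_diff)

lemma lowner_limit_lower:
  "(f \<longlongrightarrow> L) sequentially \<Longrightarrow> \<forall>\<^sub>F n in sequentially. lowner A (f n) \<Longrightarrow> lowner A L"
  unfolding lowner_def by (rule psd_limit[of "\<lambda>n. f n - A"]) (auto intro: tendsto_intros)

lemma lowner_limit_upper:
  "(f \<longlongrightarrow> L) sequentially \<Longrightarrow> \<forall>\<^sub>F n in sequentially. lowner (f n) B \<Longrightarrow> lowner L B"
  unfolding lowner_def by (rule psd_limit[of "\<lambda>n. B - f n"]) (auto intro: tendsto_intros)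

lemma mem_PDO_iff: "A \<in> PDO \<longleftrightarrow> psd A \<and> Re (mtrace A) \<le> 1"
  by (simp add: PDO_def pdo_def)

lemma zero_mem_PDO: "0 \<in> PDO"
  by (simp add: mem_PDO_iff psd_zero mtrace_zero)

lemma mem_PDO_if_lowner: "psd A \<Longrightarrow> lowner A B \<Longrightarrow> B \<in> PDO \<Longrightarrow> A \<in> PDO"
  using lowner_mtrace by (fastforce simp: mem_PDO_iff)

lemma diff_mem_PDO: "psd A \<Longrightarrow> lowner A B \<Longrightarrow> B \<in> PDO \<Longrightarrow> B - A \<in> PDO"
  using psd_mtrace_nonneg[of A] by (auto simp: mem_PDO_iff lowner_def mtrace_diff)

subsection \<open>Convergence of Loewner chains\<close>

fun increments :: "(nat \<Rightarrow> 'a::ab_group_add) \<Rightarrow> nat \<Rightarrow> 'a" where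
  "increments f 0 = f 0"
| "increments f (Suc i) = f (Suc i) - f i"

lemma sum_increments: "(\<Sum>i<Suc n. increments f i) = f n"
  by (induction n) simp_all

lemma lowner_chain_has_sum:
  fixes \<rho> :: "nat \<Rightarrow> complex ^ 'n ^ 'n"
  assumes psd0: "psd (\<rho> 0)" and chain: "\<And>n. lowner (\<rho> n) (\<rho> (Suc n))"
    and bounded: "\<And>n. Re (mtrace (\<rho> n)) \<le> B"
  shows "\<exists>L. \<rho> \<longlonglongrightarrow> L \<and> (increments \<rho> has_sum L) UNIV"
proof -
  let ?d = "increments \<rho>"
  have psd_d: "psd (?d i)" for i
    using psd0 chain unfolding lowner_def by (cases i) auto
  define t where "t i = Re (mtrace (?d i))" for i
  have t_nonneg: "t i \<ge> 0" for i
    unfolding t_def by (rule psd_mtrace_nonneg[OF psd_d])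
  have "(\<Sum>k\<le>n. t k) = Re (mtrace (\<rho> n))" for n
    unfolding t_def lessThan_Suc_atMost[symmetric]
    by (simp only: Re_sum[symmetric] mtrace_sum[symmetric] sum_increments)
  then have "(\<Sum>k\<le>n. t k) \<le> B" for n
    using bounded by simp
  with t_nonneg have "summable t" by (rule bounded_imp_summable)
  then have "summable (\<lambda>i. real (CARD('n) * CARD('n)) * t i)"
    by (rule summable_mult)
  moreover have "norm (norm (?d i)) \<le> real (CARD('n) * CARD('n)) * t i" for i
    using psd_norm_le_mtrace[OF psd_d] by (simp add: t_def)
  ultimately have norm_summable: "summable (\<lambda>i. norm (?d i))"
    by (rule summable_comparison_test'[where N = 0])
  then have sums: "?d sums suminf ?d" by (rule summable_sums[OF summable_norm_cancel])
  then have "(\<lambda>n. \<Sum>i<Suc n. ?d i) \<longlonglongrightarrow> suminf ?d"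
    unfolding sums_def by (rule LIMSEQ_Suc)
  then have "\<rho> \<longlonglongrightarrow> suminf ?d" unfolding sum_increments .
  moreover have "(?d has_sum suminf ?d) UNIV" by (rule norm_summable_imp_has_sum[OF norm_summable sums])
  ultimately show ?thesis by blast
qed

lemma lowner_lub_eq_limit:
  fixes \<rho> :: "nat \<Rightarrow> ('v::finite) qop"
  assumes psd: "\<And>n. psd (\<rho> n)" and chain: "\<And>n. lowner (\<rho> n) (\<rho> (Suc n))"
    and lub: "is_lowner_lub \<rho> \<sigma>" and lim: "\<rho> \<longlonglongrightarrow> L"
  shows "\<sigma> = L"
proof (rule lowner_antisym)
  have \<sigma>: "\<sigma> \<in> PDO" "\<And>n. lowner (\<rho> n) \<sigma>" using lub by (auto simp: is_lowner_lub_def)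
  show L_le: "lowner L \<sigma>" by (rule lowner_limit_upper[OF lim]) (simp add: \<sigma>)
  have upper: "lowner (\<rho> n) L" for n
    by (rule lowner_limit_lower[OF lim])
      (use lowner_chain[of \<rho>, OF chain] in \<open>auto simp: eventually_sequentially\<close>)
  have "L \<in> PDO" by (rule mem_PDO_if_lowner[OF psd_limit[OF lim] L_le \<sigma>(1)]) (simp add: psd)
  then show "lowner \<sigma> L" using lub upper by (simp add: is_lowner_lub_def)
qed

lemma admissible_family_partial_sums:
  fixes \<rho> :: "nat \<Rightarrow> ('v::finite) qop"
  assumes adm: "admissible_family I x \<rho> \<sigma>"
  defines "S \<equiv> \<lambda>n. \<Sum>i\<in>I \<inter> {..<n}. x i *\<^sub>R \<rho> i"
  shows "\<And>n. lowner (S n) (S (Suc n))" and "\<And>n. S n \<in> PDO" and "is_lowner_lub S \<sigma>"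
proof -
  have terms: "\<And>i. i \<in> I \<Longrightarrow> psd (x i *\<^sub>R \<rho> i)" and \<sigma>: "\<sigma> \<in> PDO"
    and has_sum: "((\<lambda>i. x i *\<^sub>R \<rho> i) has_sum \<sigma>) I"
    using adm by (auto simp: admissible_family_def mem_PDO_iff intro!: psd_scaleR)
  define g where "g i = (if i \<in> I then x i *\<^sub>R \<rho> i else 0)" for i
  have S_eq: "S n = (\<Sum>i<n. g i)" for n
    unfolding S_def g_def Int_commute[of I] by (simp add: sum.inter_restrict)
  have "(g has_sum \<sigma>) UNIV"
    using has_sum has_sum_cong_neutral[where f = "\<lambda>i. x i *\<^sub>R \<rho> i" and g = g and S = I and T = UNIV]
    by (simp add: g_def)
  then have lim: "S \<longlonglongrightarrow> \<sigma>"
    using has_sum_imp_sums unfolding sums_def S_eq[abs_def] by blast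
  show chain: "lowner (S n) (S (Suc n))" for n
    unfolding S_eq by (simp add: lowner_add_psd g_def terms psd_zero)
  have upper: "lowner (S n) \<sigma>" for n
    by (rule lowner_limit_lower[OF lim])
      (use lowner_chain[of S, OF chain] in \<open>auto simp: eventually_sequentially\<close>)
  show "S n \<in> PDO" for n
    by (rule mem_PDO_if_lowner[OF _ upper \<sigma>]) (unfold S_def, rule psd_sum, simp add: terms)
  show "is_lowner_lub S \<sigma>"
    unfolding is_lowner_lub_def using \<sigma> upper lowner_limit_upper[OF lim] by auto
qed

lemma admissible_family_term_le:
  fixes \<rho> :: "nat \<Rightarrow> ('v::finite) qop"
  assumes adm: "admissible_family I x \<rho> \<sigma>" and i: "i \<in> I"
  shows "lowner (x i *\<^sub>R \<rho> i) \<sigma>"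
proof -
  define S where "S n = (\<Sum>j\<in>I \<inter> {..<n}. x j *\<^sub>R \<rho> j)" for n
  have "S (Suc i) = x i *\<^sub>R \<rho> i + S i"
    using i by (simp add: S_def lessThan_Suc Int_insert_right add.commute)
  moreover have "psd (S i)"
    using admissible_family_partial_sums(2)[OF adm] by (simp add: S_def mem_PDO_iff)
  ultimately have "lowner (x i *\<^sub>R \<rho> i) (S (Suc i))" by (simp add: lowner_add_psd)
  moreover have "lowner (S (Suc i)) \<sigma>"
    using admissible_family_partial_sums(3)[OF adm] by (simp add: S_def is_lowner_lub_def)
  ultimately show ?thesis by (rule lowner_trans)
qed

lemma admissible_family_pair:
  fixes A B :: "('v::finite) qop"
  assumes "A \<in> PDO" "B \<in> PDO" "u > 0" "v > 0" "u *\<^sub>R A + v *\<^sub>R B \<in> PDO"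
  shows "admissible_family {0, 1} (\<lambda>i. if i = 0 then u else v) (\<lambda>i. if i = 0 then A else B)
    (u *\<^sub>R A + v *\<^sub>R B)"
  unfolding admissible_family_def using assms by (auto intro!: has_sum_finiteI)

lemma admissible_family_singleton:
  fixes A :: "('v::finite) qop"
  assumes "A \<in> PDO" "u > 0" "u *\<^sub>R A \<in> PDO"
  shows "admissible_family {0} (\<lambda>_. u) (\<lambda>_. A) (u *\<^sub>R A)"
  unfolding admissible_family_def using assms by (auto intro!: has_sum_finiteI)

subsection \<open>Characterisations of well-structured domains\<close>

text \<open>Condition (2) of the theorem, for a single set \<open>\<gamma> a\<close>.\<close>

definition admissible_closed :: "('v::finite) qop set \<Rightarrow> bool" where
  "admissible_closed G \<longleftrightarrow>
     (\<forall>I x \<rho> \<sigma>. admissible_family I x \<rho> \<sigma> \<longrightarrow> (\<sigma> \<in> G \<longleftrightarrow> (\<forall>i\<in>I. \<rho> i \<in> G)))"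

lemma well_structured_iff_admissible_closed:
  fixes \<alpha> :: "('v::finite) qop set \<Rightarrow> 'a::complete_lattice"
  assumes emb: "galois_embedding \<alpha> \<gamma>"
  shows "well_structured \<alpha> \<gamma> \<longleftrightarrow> (\<forall>a. admissible_closed (\<gamma> a))"
proof -
  have mem_iff: "\<tau> \<in> \<gamma> a \<longleftrightarrow> \<alpha> {\<tau>} \<le> a" if "\<tau> \<in> PDO" for \<tau> a
    using emb that unfolding galois_embedding_def galois_connection_def by auto
  have sup_iff: "\<alpha> {\<sigma>} = (SUP i\<in>I. \<alpha> {\<rho> i}) \<longleftrightarrow> (\<forall>a. \<sigma> \<in> \<gamma> a \<longleftrightarrow> (\<forall>i\<in>I. \<rho> i \<in> \<gamma> a))"
    if adm: "admissible_family I x \<rho> \<sigma>" for I x \<rho> \<sigma>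
  proof -
    have "(\<forall>a. \<sigma> \<in> \<gamma> a \<longleftrightarrow> (\<forall>i\<in>I. \<rho> i \<in> \<gamma> a)) \<longleftrightarrow>
        (\<forall>a. \<alpha> {\<sigma>} \<le> a \<longleftrightarrow> (SUP i\<in>I. \<alpha> {\<rho> i}) \<le> a)"
      using adm mem_iff by (auto simp: admissible_family_def SUP_le_iff)
    also have "\<dots> \<longleftrightarrow> \<alpha> {\<sigma>} = (SUP i\<in>I. \<alpha> {\<rho> i})"
    proof
      assume "\<forall>a. \<alpha> {\<sigma>} \<le> a \<longleftrightarrow> (SUP i\<in>I. \<alpha> {\<rho> i}) \<le> a"
      then show "\<alpha> {\<sigma>} = (SUP i\<in>I. \<alpha> {\<rho> i})" by (metis order.antisym order.refl)
    qed simp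
    finally show ?thesis ..
  qed
  have "well_structured \<alpha> \<gamma> \<longleftrightarrow> (\<forall>I x \<rho> \<sigma>. admissible_family I x \<rho> \<sigma> \<longrightarrow>
      (\<forall>a. \<sigma> \<in> \<gamma> a \<longleftrightarrow> (\<forall>i\<in>I. \<rho> i \<in> \<gamma> a)))"
    using emb by (simp add: well_structured_def sup_iff cong: imp_cong)
  then show ?thesis unfolding admissible_closed_def by blast
qed

lemma admissible_closed_imp_down_closed:
  fixes G :: "('v::finite) qop set"
  assumes "G \<subseteq> PDO" and closed: "admissible_closed G"
  shows "down_closed G"
  unfolding down_closed_def
proof (intro allI impI, elim conjE)
  fix \<rho> \<sigma> assume \<rho>: "\<rho> \<in> PDO" and le: "lowner \<rho> \<sigma>" and "\<sigma> \<in> G"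
  then have \<sigma>: "\<sigma> \<in> PDO" using assms(1) by auto
  have "\<sigma> - \<rho> \<in> PDO" using \<rho> by (intro diff_mem_PDO[OF _ le \<sigma>]) (simp add: mem_PDO_iff)
  then have "admissible_family {0, 1} (\<lambda>_. 1) (\<lambda>i. if i = 0 then \<rho> else \<sigma> - \<rho>) \<sigma>"
    using admissible_family_pair[of \<rho> "\<sigma> - \<rho>" 1 1] \<rho> \<sigma> by simp
  with closed \<open>\<sigma> \<in> G\<close> show "\<rho> \<in> G" unfolding admissible_closed_def by fastforce
qed

lemma admissible_closed_imp_scalar_closed:
  fixes G :: "('v::finite) qop set"
  assumes "G \<subseteq> PDO" and closed: "admissible_closed G"
  shows "scalar_closed G"
  unfolding scalar_closed_def
proof (intro allI impI, elim conjE)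
  fix \<rho> and c :: real assume "\<rho> \<in> G" "c > 0" "c *\<^sub>R \<rho> \<in> PDO"
  moreover from this have "admissible_family {0} (\<lambda>_. c) (\<lambda>_. \<rho>) (c *\<^sub>R \<rho>)"
    using assms(1) by (intro admissible_family_singleton) auto
  ultimately show "c *\<^sub>R \<rho> \<in> G" using closed unfolding admissible_closed_def by blast
qed

lemma admissible_closed_imp_convex:
  fixes G :: "('v::finite) qop set"
  assumes "G \<subseteq> PDO" and closed: "admissible_closed G"
  shows "convex G"
  unfolding convex_def
proof (intro ballI allI impI)
  fix A B and u v :: real
  assume AB: "A \<in> G" "B \<in> G" and uv: "0 \<le> u" "0 \<le> v" "u + v = 1"
  show "u *\<^sub>R A + v *\<^sub>R B \<in> G"
  proof (cases "u = 0 \<or> v = 0")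
    case True
    then show ?thesis using AB uv by auto
  next
    case False
    have PDO: "A \<in> PDO" "B \<in> PDO" using AB assms(1) by auto
    have "Re (mtrace (u *\<^sub>R A + v *\<^sub>R B)) = u * Re (mtrace A) + v * Re (mtrace B)"
      by (simp add: mtrace_add mtrace_scaleR)
    also have "\<dots> \<le> u * 1 + v * 1"
      using PDO uv by (intro add_mono mult_left_mono) (auto simp: mem_PDO_iff)
    finally have "u *\<^sub>R A + v *\<^sub>R B \<in> PDO"
      using PDO uv by (auto simp: mem_PDO_iff intro!: psd_add psd_scaleR)
    then have "admissible_family {0, 1} (\<lambda>i. if i = 0 then u else v)
        (\<lambda>i. if i = 0 then A else B) (u *\<^sub>R A + v *\<^sub>R B)"
      using PDO uv False by (intro admissible_family_pair) auto
    with closed AB show ?thesis unfolding admissible_closed_def by fastforce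
  qed
qed

lemma admissible_closed_imp_omega_cpo:
  fixes G :: "('v::finite) qop set"
  assumes GP: "G \<subseteq> PDO" and closed: "admissible_closed G"
  shows "omega_cpo G"
  unfolding omega_cpo_def
proof (intro allI impI, elim conjE)
  fix \<rho> :: "nat \<Rightarrow> 'v qop" and \<sigma>
  assume G: "\<forall>i. \<rho> i \<in> G" and chain: "\<forall>i. lowner (\<rho> i) (\<rho> (Suc i))"
    and lub: "is_lowner_lub \<rho> \<sigma>"
  have PDO: "\<rho> n \<in> PDO" for n using G GP by auto
  then have psd: "psd (\<rho> n)" for n by (simp add: mem_PDO_iff)
  obtain L where lim: "\<rho> \<longlonglongrightarrow> L" and has_sum: "(increments \<rho> has_sum L) UNIV"
    using lowner_chain_has_sum[of \<rho> 1] psd chain PDO by (auto simp: mem_PDO_iff)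
  have "\<sigma> = L" by (rule lowner_lub_eq_limit[OF psd _ lub lim]) (use chain in blast)
  have increments: "increments \<rho> i \<in> PDO \<and> increments \<rho> i \<in> G" for i
  proof (cases i)
    case 0
    then show ?thesis using PDO G by simp
  next
    case (Suc j)
    have "\<rho> (Suc j) - \<rho> j \<in> PDO" using chain PDO psd diff_mem_PDO by blast
    moreover have "lowner (\<rho> (Suc j) - \<rho> j) (\<rho> (Suc j))" by (rule lowner_diff_psd[OF psd])
    ultimately show ?thesis
      using Suc admissible_closed_imp_down_closed[OF GP closed] G
      unfolding down_closed_def by auto
  qed
  have "admissible_family UNIV (\<lambda>_. 1) (increments \<rho>) \<sigma>"
    unfolding admissible_family_def using increments has_sum \<open>\<sigma> = L\<close> lub
    by (simp add: is_lowner_lub_def)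
  with closed increments show "\<sigma> \<in> G" unfolding admissible_closed_def by blast
qed

lemma summand_mem_if_sum_mem:
  fixes \<rho> :: "nat \<Rightarrow> ('v::finite) qop" and G :: "'v qop set"
  assumes dc: "down_closed G" and sc: "scalar_closed G"
    and adm: "admissible_family I x \<rho> \<sigma>" and "\<sigma> \<in> G" and i: "i \<in> I"
  shows "\<rho> i \<in> G"
proof -
  have \<rho>: "\<rho> i \<in> PDO" "x i > 0" and \<sigma>: "\<sigma> \<in> PDO"
    using adm i by (auto simp: admissible_family_def)
  have "psd (x i *\<^sub>R \<rho> i)" using \<rho> by (simp add: mem_PDO_iff psd_scaleR)
  moreover have le: "lowner (x i *\<^sub>R \<rho> i) \<sigma>" by (rule admissible_family_term_le[OF adm i])
  ultimately have "x i *\<^sub>R \<rho> i \<in> PDO" using \<sigma> by (rule mem_PDO_if_lowner)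
  with dc le \<open>\<sigma> \<in> G\<close> have "x i *\<^sub>R \<rho> i \<in> G" unfolding down_closed_def by blast
  then have "(1 / x i) *\<^sub>R (x i *\<^sub>R \<rho> i) \<in> G"
    using sc[unfolded scalar_closed_def, rule_format, of "x i *\<^sub>R \<rho> i" "1 / x i"] \<rho> by simp
  then show ?thesis using \<rho> by simp
qed

lemma positive_combination_mem:
  fixes \<rho> :: "nat \<Rightarrow> ('v::finite) qop" and G :: "'v qop set"
  assumes cv: "convex G" and sc: "scalar_closed G" and F: "finite F" "F \<noteq> {}"
    and G: "\<And>i. i \<in> F \<Longrightarrow> \<rho> i \<in> G" and y: "\<And>i. i \<in> F \<Longrightarrow> y i > 0"
    and PDO: "(\<Sum>i\<in>F. y i *\<^sub>R \<rho> i) \<in> PDO"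
  shows "(\<Sum>i\<in>F. y i *\<^sub>R \<rho> i) \<in> G"
proof -
  define s where "s = (\<Sum>i\<in>F. y i)"
  have s: "s > 0" unfolding s_def using F y by (simp add: sum_pos)
  have combination: "(\<Sum>i\<in>F. (y i / s) *\<^sub>R \<rho> i) \<in> G"
  proof (rule convex_sum[OF F(1) cv])
    show "(\<Sum>i\<in>F. y i / s) = 1" using s unfolding s_def by (simp add: sum_divide_distrib[symmetric])
  qed (use G y s in \<open>auto intro: less_imp_le\<close>)
  have rescale: "s *\<^sub>R (\<Sum>i\<in>F. (y i / s) *\<^sub>R \<rho> i) = (\<Sum>i\<in>F. y i *\<^sub>R \<rho> i)"
    unfolding scaleR_sum_right using s by simp
  show ?thesis
    using sc combination s PDO unfolding scalar_closed_def rescale[symmetric] by blast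
qed

lemma sum_mem_if_summands_mem:
  fixes \<rho> :: "nat \<Rightarrow> ('v::finite) qop" and G :: "'v qop set"
  assumes cv: "convex G" and oc: "omega_cpo G" and dc: "down_closed G" and sc: "scalar_closed G"
    and adm: "admissible_family I x \<rho> \<sigma>" and G: "\<forall>i\<in>I. \<rho> i \<in> G"
  shows "\<sigma> \<in> G"
proof -
  define S where "S n = (\<Sum>i\<in>I \<inter> {..<n}. x i *\<^sub>R \<rho> i)" for n
  note partial_sums = admissible_family_partial_sums[OF adm, folded S_def]
  have fam: "\<And>i. i \<in> I \<Longrightarrow> \<rho> i \<in> PDO \<and> x i > 0" and "I \<noteq> {}"
    using adm by (auto simp: admissible_family_def)
  then obtain i0 where "i0 \<in> I" by blast
  have "lowner 0 (\<rho> i0)"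
    using fam[OF \<open>i0 \<in> I\<close>] by (simp add: lowner_def mem_PDO_iff)
  then have "0 \<in> G"
    using dc zero_mem_PDO G \<open>i0 \<in> I\<close> unfolding down_closed_def by blast
  have "S n \<in> G" for n
  proof (cases "I \<inter> {..<n} = {}")
    case True
    then show ?thesis using \<open>0 \<in> G\<close> by (simp add: S_def)
  next
    case False
    show ?thesis
      unfolding S_def
      by (rule positive_combination_mem[OF cv sc])
        (use False G fam partial_sums(2)[of n] in \<open>auto simp: S_def\<close>)
  qed
  then show ?thesis
    using oc partial_sums(1,3) unfolding omega_cpo_def by blast
qed

lemma admissible_closed_iff:
  fixes G :: "('v::finite) qop set"
  assumes "G \<subseteq> PDO"
  shows "admissible_closed G \<longleftrightarrow> convex G \<and> omega_cpo G \<and> down_closed G \<and> scalar_closed G"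
proof
  assume "admissible_closed G"
  then show "convex G \<and> omega_cpo G \<and> down_closed G \<and> scalar_closed G"
    using assms admissible_closed_imp_convex admissible_closed_imp_omega_cpo
      admissible_closed_imp_down_closed admissible_closed_imp_scalar_closed by blast
next
  assume "convex G \<and> omega_cpo G \<and> down_closed G \<and> scalar_closed G"
  then show "admissible_closed G"
    unfolding admissible_closed_def
    using summand_mem_if_sum_mem sum_mem_if_summands_mem by blast
qed

theorem mainTheorem1:
  fixes \<alpha> :: "('v::finite) qop set \<Rightarrow> 'a::complete_lattice"
    and \<gamma> :: "'a \<Rightarrow> 'v qop set"
  assumes gamma_Q: "\<And>a. \<gamma> a \<subseteq> PDO"
    and alpha_mono: "\<And>S T. S \<subseteq> T \<Longrightarrow> T \<subseteq> PDO \<Longrightarrow> \<alpha> S \<le> \<alpha> T"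
    and gamma_mono: "mono \<gamma>"
    and emb: "galois_embedding \<alpha> \<gamma>"
  shows "(well_structured \<alpha> \<gamma>
           \<longleftrightarrow> (\<forall>a I x \<rho> \<sigma>. admissible_family I x \<rho> \<sigma> \<longrightarrow>
                  (\<sigma> \<in> \<gamma> a \<longleftrightarrow> (\<forall>i\<in>I. \<rho> i \<in> \<gamma> a))))
       \<and> (well_structured \<alpha> \<gamma>
           \<longleftrightarrow> (\<forall>a. convex (\<gamma> a) \<and> omega_cpo (\<gamma> a) \<and> down_closed (\<gamma> a)
                    \<and> scalar_closed (\<gamma> a)))"
proof -
  have "well_structured \<alpha> \<gamma> \<longleftrightarrow> (\<forall>a. admissible_closed (\<gamma> a))"
    by (rule well_structured_iff_admissible_closed[OF emb])
  moreover have "admissible_closed (\<gamma> a) \<longleftrightarrow>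
      convex (\<gamma> a) \<and> omega_cpo (\<gamma> a) \<and> down_closed (\<gamma> a) \<and> scalar_closed (\<gamma> a)" for a
    by (rule admissible_closed_iff[OF gamma_Q])
  ultimately show ?thesis unfolding admissible_closed_def by simp
qed

end
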